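(* Let $w:[0,\infty)\to\mathbb R$ be twice differentiable and suppose the following hold: - $c_T=\inf_{t\in[0,T]}|w'_t|>0$ for every $T>0$; - $w''/(w')^2\in L^1_{loc}(0,+\infty)$. Then $w$ is $(1-\gamma,\gamma)$-irregular for every $\gamma\in(0,1)$.
   Context: For continuous $w$ set $\Phi^w_{s,t}(a)=\int_s^te^{iaw_r}\,dr$ and $\langle a\rangle=(1+a^2)^{1/2}$. For $\rho,\gamma>0$, $w$ is called $(\rho,\gamma)$-irregular if, for every $T>0$, $$\sup_{a\in\mathbb R}\,\sup_{0\le s<t\le T}\langle a\rangle^\rho\frac{|\Phi^w_{s,t}(a)|}{|t-s|^\gamma}<\infty.$$ *)

theory Defs
  imports "HOL-Analysis.Analysis"
begin

definition jbracket :: "real \<Rightarrow> real" where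
  "jbracket a = sqrt (1 + a\<^sup>2)"

definition Phi :: "(real \<Rightarrow> real) \<Rightarrow> real \<Rightarrow> real \<Rightarrow> real \<Rightarrow> complex" where
  "Phi w s t a = integral {s..t} (\<lambda>r. exp (\<i> * complex_of_real (a * w r)))"

text \<open>(rho,gamma)-irregularity: for every T > 0 the supremum over a and 0 <= s < t <= T
  is finite (the quantities are nonnegative, so finiteness = bounded above).\<close>
definition irregular :: "(real \<Rightarrow> real) \<Rightarrow> real \<Rightarrow> real \<Rightarrow> bool" where
  "irregular w \<rho> \<gamma> \<longleftrightarrow> \<rho> > 0 \<and> \<gamma> > 0 \<and>
     (\<forall>T>0. bdd_above {jbracket a powr \<rho> * norm (Phi w s t a) / (t - s) powr \<gamma> |
                          a s t. 0 \<le> s \<and> s < t \<and> t \<le> T})"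

end

theory Submission
  imports Defs
begin

text \<open>Where \<open>w'\<close> does not vanish, \<open>exp(i a w) = (exp(i a w))' / (i a w')\<close>, so one
  integration by parts gives \<open>|a| |Phi w s t a| \<le> 2/c_T + \<integral>_0^T |w''/w'^2|\<close>.
  Interpolating this with the trivial bound \<open>|Phi w s t a| \<le> t - s\<close> via
  \<open>min x y \<le> x^\<gamma> y^(1-\<gamma>)\<close> gives \<open>\<langle>a\<rangle>^(1-\<gamma>) |Phi w s t a| \<lesssim> (t - s)^\<gamma>\<close>.\<close>

lemma has_vector_derivative_exp_i_phase:
  fixes w :: "real \<Rightarrow> real"
  assumes "(w has_real_derivative d) (at r within S)"
  shows "((\<lambda>r. exp (\<i> * complex_of_real (a * w r))) has_vector_derivative
           (\<i> * complex_of_real (a * d)) * exp (\<i> * complex_of_real (a * w r))) (at r within S)"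
proof -
  have "((\<lambda>r. \<i> * complex_of_real (a * w r)) has_vector_derivative \<i> * complex_of_real (a * d))
          (at r within S)"
    by (auto intro!: derivative_eq_intros assms)
  from field_vector_diff_chain_within[OF this, of exp "exp (\<i> * complex_of_real (a * w r))"]
  show ?thesis
    by (auto simp: o_def intro: DERIV_subset[OF DERIV_exp])
qed

lemma norm_Phi_le_length:
  assumes "s \<le> t" and "continuous_on {s..t} w"
  shows "norm (Phi w s t a) \<le> t - s"
proof -
  have "continuous_on {s..t} (\<lambda>r. exp (\<i> * complex_of_real (a * w r)))"
    by (intro continuous_intros assms)
  then have "norm (Phi w s t a) \<le> integral {s..t} (\<lambda>r. 1::real)"
    unfolding Phi_def
    by (intro integral_norm_bound_integral integrable_continuous_interval) auto
  with assms show ?thesis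
    by simp
qed

lemma norm_Phi_le_nonstationary_phase:
  fixes w w' w'' :: "real \<Rightarrow> real"
  assumes st: "s \<le> t"
    and dw: "\<And>r. r \<in> {s..t} \<Longrightarrow> (w has_real_derivative w' r) (at r within {s..t})"
    and dw': "\<And>r. r \<in> {s..t} \<Longrightarrow> (w' has_real_derivative w'' r) (at r within {s..t})"
    and c: "c > 0" "\<And>r. r \<in> {s..t} \<Longrightarrow> c \<le> \<bar>w' r\<bar>"
    and int: "(\<lambda>r. \<bar>w'' r / (w' r)\<^sup>2\<bar>) integrable_on {s..t}"
    and a: "a \<noteq> 0"
  shows "norm (Phi w s t a) \<le> (2/c + integral {s..t} (\<lambda>r. \<bar>w'' r / (w' r)\<^sup>2\<bar>)) / \<bar>a\<bar>"
proof -
  define E where "E r = exp (\<i> * complex_of_real (a * w r))" for r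
  define h where "h r = w'' r / (w' r)\<^sup>2" for r
  define F where "F r = E r * complex_of_real (1 / w' r) / (\<i> * complex_of_real a)" for r
  define G where "G r = E r * complex_of_real (h r) / (\<i> * complex_of_real a)" for r
  have w'_nz: "w' r \<noteq> 0" if "r \<in> {s..t}" for r
    using c that by force
  text \<open>\<open>F\<close> is the antiderivative of \<open>E\<close> up to the error term \<open>G\<close>: this is the integration by parts.\<close>
  have F_deriv: "(F has_vector_derivative (E r - G r)) (at r within {s..t})" if r: "r \<in> {s..t}" for r
  proof -
    have "(E has_vector_derivative (\<i> * complex_of_real (a * w' r)) * E r) (at r within {s..t})"
      unfolding E_def by (rule has_vector_derivative_exp_i_phase[OF dw[OF r]])
    moreover have "((\<lambda>r. 1 / w' r) has_real_derivative - w'' r / (w' r)\<^sup>2) (at r within {s..t})"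
      using dw'[OF r] w'_nz[OF r] by (auto intro!: derivative_eq_intros simp: power2_eq_square)
    ultimately have "(F has_vector_derivative
        (E r * complex_of_real (- w'' r / (w' r)\<^sup>2)
          + (\<i> * complex_of_real (a * w' r)) * E r * complex_of_real (1 / w' r))
        / (\<i> * complex_of_real a)) (at r within {s..t})"
      unfolding F_def
      by (intro has_vector_derivative_divide has_vector_derivative_mult has_vector_derivative_of_real)
    also have "(E r * complex_of_real (- w'' r / (w' r)\<^sup>2)
          + (\<i> * complex_of_real (a * w' r)) * E r * complex_of_real (1 / w' r))
        / (\<i> * complex_of_real a) = E r - G r"
      using w'_nz[OF r] a by (simp add: G_def h_def field_simps)
    finally show ?thesis .
  qed
  have "continuous_on {s..t} E"
    using has_vector_derivative_exp_i_phase[OF dw] unfolding E_def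
    by (meson continuous_on_eq_continuous_within has_vector_derivative_continuous)
  then have "(E has_integral Phi w s t a) {s..t}"
    unfolding Phi_def E_def[symmetric] using integrable_continuous_interval by blast
  from has_integral_diff[OF this fundamental_theorem_of_calculus[OF st F_deriv]]
  have G_integral: "(G has_integral (Phi w s t a - (F t - F s))) {s..t}"
    by simp
  have "norm (integral {s..t} G) \<le> integral {s..t} (\<lambda>r. \<bar>h r\<bar> / \<bar>a\<bar>)"
    using G_integral int unfolding h_def
    by (intro integral_norm_bound_integral integrable_on_divide)
      (auto simp: G_def E_def h_def norm_mult norm_divide norm_power)
  then have "norm (Phi w s t a - (F t - F s)) \<le> integral {s..t} (\<lambda>r. \<bar>h r\<bar> / \<bar>a\<bar>)"
    using G_integral by (simp add: integral_unique)
  moreover have F_bound: "norm (F r) \<le> 1 / (c * \<bar>a\<bar>)" if r: "r \<in> {s..t}" for r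
  proof -
    have "norm (F r) = 1 / (\<bar>w' r\<bar> * \<bar>a\<bar>)"
      using w'_nz[OF r] by (simp add: F_def E_def norm_mult norm_divide)
    also have "\<dots> \<le> 1 / (c * \<bar>a\<bar>)"
      using c r a w'_nz[OF r] by (intro divide_left_mono mult_right_mono mult_pos_pos) auto
    finally show ?thesis .
  qed
  moreover have "norm (Phi w s t a) \<le> norm (Phi w s t a - (F t - F s)) + norm (F t) + norm (F s)"
    by (smt (verit) norm_triangle_ineq4 norm_triangle_sub)
  ultimately have "norm (Phi w s t a)
      \<le> integral {s..t} (\<lambda>r. \<bar>h r\<bar> / \<bar>a\<bar>) + 1 / (c * \<bar>a\<bar>) + 1 / (c * \<bar>a\<bar>)"
    using F_bound[of t] F_bound[of s] st by fastforce
  also have "\<dots> = (2/c + integral {s..t} (\<lambda>r. \<bar>w'' r / (w' r)\<^sup>2\<bar>)) / \<bar>a\<bar>"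
    unfolding integral_divide h_def using c a by (simp add: field_simps del: integral_divide)
  finally show ?thesis .
qed

lemma abs_mult_norm_Phi_le_on_interval:
  fixes w w' w'' :: "real \<Rightarrow> real"
  assumes dw: "\<And>r. r \<in> {0..T} \<Longrightarrow> (w has_real_derivative w' r) (at r within {0..T})"
    and dw': "\<And>r. r \<in> {0..T} \<Longrightarrow> (w' has_real_derivative w'' r) (at r within {0..T})"
    and c: "c > 0" "\<And>r. r \<in> {0..T} \<Longrightarrow> c \<le> \<bar>w' r\<bar>"
    and int: "(\<lambda>r. \<bar>w'' r / (w' r)\<^sup>2\<bar>) integrable_on {0..T}"
    and st: "0 \<le> s" "s \<le> t" "t \<le> T"
  shows "\<bar>a\<bar> * norm (Phi w s t a) \<le> 2/c + integral {0..T} (\<lambda>r. \<bar>w'' r / (w' r)\<^sup>2\<bar>)"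
proof (cases "a = 0")
  case True
  have "integral {0..T} (\<lambda>r. \<bar>w'' r / (w' r)\<^sup>2\<bar>) \<ge> 0"
    by (rule integral_nonneg[OF int]) auto
  with True c show ?thesis
    by simp
next
  case False
  have sub: "{s..t} \<subseteq> {0..T}"
    using st by auto
  have int_st: "(\<lambda>r. \<bar>w'' r / (w' r)\<^sup>2\<bar>) integrable_on {s..t}"
    by (rule integrable_on_subinterval[OF int sub])
  have "norm (Phi w s t a) \<le> (2/c + integral {s..t} (\<lambda>r. \<bar>w'' r / (w' r)\<^sup>2\<bar>)) / \<bar>a\<bar>"
    using sub by (intro norm_Phi_le_nonstationary_phase[OF st(2) _ _ c(1) _ int_st False])
      (auto intro: DERIV_subset[OF dw] DERIV_subset[OF dw'] c(2))
  also have "\<dots> \<le> (2/c + integral {0..T} (\<lambda>r. \<bar>w'' r / (w' r)\<^sup>2\<bar>)) / \<bar>a\<bar>"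
    using integral_subset_le[OF sub int_st int] by (intro divide_right_mono) auto
  finally show ?thesis
    using False by (simp add: field_simps)
qed

lemma jbracket_powr_mult_le:
  fixes a d T P K g :: real
  assumes g: "0 < g" "g < 1" and d: "0 < d" "d \<le> T" and P: "0 \<le> P" "P \<le> d" and K: "K > 0"
    and aP: "\<bar>a\<bar> * P \<le> K"
  shows "jbracket a powr (1 - g) * P / d powr g \<le> 2 * T powr (1 - g) + (2 * K) powr (1 - g)"
proof -
  have j1: "jbracket a \<ge> 1"
    unfolding jbracket_def by simp
  have dg: "d powr g > 0"
    using d by simp
  show ?thesis
  proof (cases "\<bar>a\<bar> \<le> 1")
    case True
    then have "a\<^sup>2 \<le> 1"
      by (simp add: abs_square_le_1)
    then have "jbracket a \<le> 2"
      unfolding jbracket_def by (intro real_le_lsqrt) auto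
    then have "jbracket a powr (1 - g) \<le> 2 powr 1"
      using g j1 powr_mono2[of "1 - g" "jbracket a" 2] powr_mono[of "1 - g" 1 2] by linarith
    moreover have "P / d powr g \<le> T powr (1 - g)"
    proof -
      have "P / d powr g \<le> d / d powr g"
        using P dg by (simp add: divide_right_mono)
      also have "\<dots> = d powr (1 - g)"
        using d by (simp add: powr_diff)
      also have "\<dots> \<le> T powr (1 - g)"
        using d g by (intro powr_mono2) auto
      finally show ?thesis .
    qed
    ultimately have "jbracket a powr (1 - g) * (P / d powr g) \<le> 2 * T powr (1 - g)"
      using P dg by (intro mult_mono) auto
    then show ?thesis
      using powr_ge_zero[of "2 * K" "1 - g"] by (simp add: add_increasing2)
  next
    case False
    show ?thesis
    proof (cases "P = 0")
      case True
      then show ?thesis by simp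
    next
      case False
      with P have P_pos: "P > 0" by simp
      have "jbracket a \<le> 2 * \<bar>a\<bar>"
        unfolding jbracket_def using \<open>\<not> \<bar>a\<bar> \<le> 1\<close>
        by (intro real_le_lsqrt) (auto simp: power_mult_distrib power2_eq_square
            abs_square_le_1[symmetric] abs_le_square_iff[symmetric])
      then have "jbracket a powr (1 - g) \<le> (2 * \<bar>a\<bar>) powr (1 - g)"
        using g j1 by (intro powr_mono2) auto
      moreover have "P powr (1 - g) \<le> (K / \<bar>a\<bar>) powr (1 - g)"
        using P g aP \<open>\<not> \<bar>a\<bar> \<le> 1\<close> by (intro powr_mono2) (auto simp: field_simps)
      moreover have "P powr g \<le> d powr g"
        using P g by (intro powr_mono2) auto
      text \<open>Split \<open>P = P\<^sup>1\<^sup>-\<^sup>g P\<^sup>g\<close>: the first factor is paid for by \<open>|a| P \<le> K\<close>, the second by \<open>P \<le> d\<close>.\<close>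
      ultimately have "jbracket a powr (1 - g) * P powr (1 - g) * (P powr g / d powr g)
          \<le> (2 * \<bar>a\<bar>) powr (1 - g) * (K / \<bar>a\<bar>) powr (1 - g) * 1"
        using dg by (intro mult_mono) auto
      also have "\<dots> = (2 * K) powr (1 - g)"
        using \<open>\<not> \<bar>a\<bar> \<le> 1\<close> K by (simp add: powr_mult[symmetric])
      finally have "jbracket a powr (1 - g) * P / d powr g \<le> (2 * K) powr (1 - g)"
        using P_pos by (simp add: mult.assoc powr_add[symmetric])
      then show ?thesis
        using powr_ge_zero[of T "1 - g"] by linarith
    qed
  qed
qed

lemma irregularI_Phi_decay:
  assumes g: "0 < g" "g < 1"
    and w_cont: "continuous_on {0..} w"
    and decay: "\<And>T. T > 0 \<Longrightarrow>
      \<exists>K>0. \<forall>a s t. 0 \<le> s \<longrightarrow> s < t \<longrightarrow> t \<le> T \<longrightarrow> \<bar>a\<bar> * norm (Phi w s t a) \<le> K"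
  shows "irregular w (1 - g) g"
  unfolding irregular_def
proof (intro conjI allI impI)
  show "0 < 1 - g" "0 < g"
    using g by auto
  fix T :: real
  assume "T > 0"
  then obtain K where K: "K > 0"
    "\<And>a s t. 0 \<le> s \<Longrightarrow> s < t \<Longrightarrow> t \<le> T \<Longrightarrow> \<bar>a\<bar> * norm (Phi w s t a) \<le> K"
    using decay by blast
  show "bdd_above {jbracket a powr (1 - g) * norm (Phi w s t a) / (t - s) powr g |
                     a s t. 0 \<le> s \<and> s < t \<and> t \<le> T}"
  proof (rule bdd_aboveI[of _ "2 * T powr (1 - g) + (2 * K) powr (1 - g)"], clarify)
    fix a s t :: real
    assume st: "0 \<le> s" "s < t" "t \<le> T"
    have "norm (Phi w s t a) \<le> t - s"
      using st by (intro norm_Phi_le_length continuous_on_subset[OF w_cont]) auto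
    with g st K show "jbracket a powr (1 - g) * norm (Phi w s t a) / (t - s) powr g
        \<le> 2 * T powr (1 - g) + (2 * K) powr (1 - g)"
      by (intro jbracket_powr_mult_le) auto
  qed
qed

theorem mainTheorem3:
  fixes w w' w'' :: "real \<Rightarrow> real"
  assumes d1: "\<And>t. t \<ge> 0 \<Longrightarrow> (w has_real_derivative w' t) (at t within {0..})"
    and d2: "\<And>t. t \<ge> 0 \<Longrightarrow> (w' has_real_derivative w'' t) (at t within {0..})"
    and cT: "\<And>T. T > 0 \<Longrightarrow> (INF t\<in>{0..T}. \<bar>w' t\<bar>) > 0"
    and L1: "\<And>T. T > 0 \<Longrightarrow> set_integrable lborel {0..T} (\<lambda>t. w'' t / (w' t)\<^sup>2)"
  shows "\<forall>\<gamma>. 0 < \<gamma> \<and> \<gamma> < 1 \<longrightarrow> irregular w (1 - \<gamma>) \<gamma>"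
proof (intro allI impI irregularI_Phi_decay)
  show "continuous_on {0..} w"
    using d1 by (intro DERIV_continuous_on) auto
  fix T :: real
  assume T: "T > 0"
  define c where "c = (INF t\<in>{0..T}. \<bar>w' t\<bar>)"
  define I where "I = integral {0..T} (\<lambda>r. \<bar>w'' r / (w' r)\<^sup>2\<bar>)"
  have c_pos: "c > 0"
    using cT[OF T] c_def by simp
  have c_le: "c \<le> \<bar>w' r\<bar>" if "r \<in> {0..T}" for r
    unfolding c_def by (rule cINF_lower[OF _ that]) (auto intro: bdd_belowI[of _ 0])
  have int: "(\<lambda>r. \<bar>w'' r / (w' r)\<^sup>2\<bar>) integrable_on {0..T}"
    using set_borel_integral_eq_integral(1)[OF set_integrable_abs[OF L1[OF T]]] .
  have "integral {0..T} (\<lambda>r. \<bar>w'' r / (w' r)\<^sup>2\<bar>) \<ge> 0"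
    by (rule integral_nonneg[OF int]) auto
  with c_pos have "2/c + I > 0"
    unfolding I_def by (smt (verit) divide_pos_pos)
  moreover have "\<bar>a\<bar> * norm (Phi w s t a) \<le> 2/c + I" if "0 \<le> s" "s < t" "t \<le> T" for a s t
    unfolding I_def using that c_pos c_le int
    by (intro abs_mult_norm_Phi_le_on_interval) (auto intro: DERIV_subset[OF d1] DERIV_subset[OF d2])
  ultimately show "\<exists>K>0. \<forall>a s t. 0 \<le> s \<longrightarrow> s < t \<longrightarrow> t \<le> T \<longrightarrow> \<bar>a\<bar> * norm (Phi w s t a) \<le> K"
    by blast
qed auto

end
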